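(* Let $(X,\tau)$ be a topological space, let $X_n\subseteq X$ ($n\in\mathbb{N}\cup\{0\}$) be subspaces, and let $f_n:X_n\to X_{n+1}$ be continuous maps, forming the nonautonomous discrete system $\{f_n\}_{n=0}^\infty$. Assume that $X_0$ is a second countable subspace of $X$ and that $X$ is first countable at every point of $X_0$. Suppose that the system $\{f_n\}_{n=0}^\infty$ is topologically transitive on $X_0$ and that $\overline{O}\neq X_0$, where $$O=\{x\in X_0 : \overline{\operatorname{orb}(x)}^{X}\cap X_0 = X_0\}.$$ Then $X_0$ is not a Baire space.
   Context: For $x_0\in X_0$, the orbit of $x_0$ under the system is $\operatorname{orb}(x_0)=\{x_0,\ f_0(x_0),\ f_1\circ f_0(x_0),\ \dots,\ f_n\circ f_{n-1}\circ\cdots\circ f_0(x_0),\ \dots\}$, and $\overline{\operatorname{orb}(x)}^{X}$ denotes its closure in $X$. The closure $\overline{O}$ is taken in $X_0$. The system $\{f_n\}_{n=0}^\infty$ is called topologically transitive on $X_0$ if for any two nonempty open sets $U_0,V_0$ of $X_0$ there exists $n\in\mathbb{N}$ such that $(f_{n-1}\circ f_{n-2}\circ\cdots\circ f_0)(U_0)\cap V_0\neq\emptyset$. A space is Baire if the intersection of any sequence of dense open subsets is dense. *)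

theory Defs
  imports "HOL-Analysis.Analysis"
begin

fun traj :: "(nat \<Rightarrow> 'a \<Rightarrow> 'a) \<Rightarrow> nat \<Rightarrow> 'a \<Rightarrow> 'a" where
  "traj f 0 x = x"
| "traj f (Suc n) x = f n (traj f n x)"

definition orb :: "(nat \<Rightarrow> 'a \<Rightarrow> 'a) \<Rightarrow> 'a \<Rightarrow> 'a set" where
  "orb f x = range (\<lambda>n. traj f n x)"

definition first_countable_at :: "'a topology \<Rightarrow> 'a \<Rightarrow> bool" where
  "first_countable_at X x \<longleftrightarrow>
     (\<exists>\<B>. countable \<B> \<and> (\<forall>V \<in> \<B>. openin X V \<and> x \<in> V) \<and>
          (\<forall>U. openin X U \<and> x \<in> U \<longrightarrow> (\<exists>V \<in> \<B>. V \<subseteq> U)))"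

definition top_transitive :: "'a topology \<Rightarrow> (nat \<Rightarrow> 'a set) \<Rightarrow> (nat \<Rightarrow> 'a \<Rightarrow> 'a) \<Rightarrow> bool" where
  "top_transitive X Xs f \<longleftrightarrow>
     (\<forall>U V. openin (subtopology X (Xs 0)) U \<and> U \<noteq> {} \<and>
            openin (subtopology X (Xs 0)) V \<and> V \<noteq> {} \<longrightarrow>
            (\<exists>n\<ge>1. traj f n ` U \<inter> V \<noteq> {}))"

definition Baire_space :: "'a topology \<Rightarrow> bool" where
  "Baire_space X \<longleftrightarrow>
     (\<forall>U :: nat \<Rightarrow> 'a set. (\<forall>n. openin X (U n) \<and> X closure_of (U n) = topspace X) \<longrightarrow>
        X closure_of (topspace X \<inter> (\<Inter>n. U n)) = topspace X)"

end

theory Submission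
  imports Defs
begin

(* Suppose X0 = Xs 0 were a Baire space.
   Second countability gives a countable dense set D \<subseteq> X0, and first
   countability of X at the points of D yields a countable family \<V> of open
   sets of X, each meeting D, such that any set meeting every member of \<V> has
   the closure of D (hence all of X0) in its closure.  For an open V meeting X0,
   the set of points of X0 whose orbit visits V is open in X0 (the iterates are
   continuous) and dense in X0 (by transitivity).  Intersecting these countably
   many open dense sets gives, by the Baire property, a dense subset of X0; all
   its points have orbits whose closure contains X0, i.e. it lies inside O.
   Hence O would be dense, contradicting the hypothesis. *)

lemma traj_continuous:
  assumes cont: "\<And>n. continuous_map (subtopology X (Xs n)) (subtopology X (Xs (Suc n))) (f n)"
  shows "continuous_map (subtopology X (Xs 0)) (subtopology X (Xs n)) (traj f n)"
proof (induction n)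
  case 0
  show ?case by simp
next
  case (Suc n)
  have "continuous_map (subtopology X (Xs 0)) (subtopology X (Xs (Suc n))) (f n \<circ> traj f n)"
    using continuous_map_compose[OF Suc cont] .
  then show ?case by (simp add: o_def)
qed

definition visiting :: "(nat \<Rightarrow> 'a set) \<Rightarrow> (nat \<Rightarrow> 'a \<Rightarrow> 'a) \<Rightarrow> 'a set \<Rightarrow> 'a set" where
  "visiting Xs f V = {x \<in> Xs 0. \<exists>n. traj f n x \<in> V}"

text \<open>The visiting set of an open set is open in X0: it is a union of preimages
  of open sets under the continuous iterates.\<close>
lemma visiting_open:
  assumes subs: "Xs 0 \<subseteq> topspace X"
    and cont: "\<And>n. continuous_map (subtopology X (Xs n)) (subtopology X (Xs (Suc n))) (f n)"
    and V: "openin X V"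
  shows "openin (subtopology X (Xs 0)) (visiting Xs f V)"
proof -
  let ?T = "subtopology X (Xs 0)"
  have topT: "topspace ?T = Xs 0" using subs by auto
  have preim_open: "openin ?T {x \<in> topspace ?T. traj f n x \<in> V \<inter> Xs n}" for n
    by (rule openin_continuous_map_preimage[OF traj_continuous[of X Xs f, OF cont]])
      (use V in \<open>auto simp: openin_subtopology\<close>)
  have into: "traj f n x \<in> Xs n" if "x \<in> Xs 0" for n x
    using continuous_map_image_subset_topspace[OF traj_continuous[of X Xs f n, OF cont]] that topT
    by auto
  have "visiting Xs f V = (\<Union>n. {x \<in> topspace ?T. traj f n x \<in> V \<inter> Xs n})"
    unfolding visiting_def using topT into by auto
  then show ?thesis using preim_open by (metis (no_types, lifting) openin_Union imageE)
qed

text \<open>For a transitive system, the visiting set of an open set meeting X0 is dense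
  in X0: every nonempty open set of X0 contains a point sent into V.\<close>
lemma visiting_dense:
  assumes trans: "top_transitive X Xs f"
    and V: "openin X V" "V \<inter> Xs 0 \<noteq> {}"
  shows "subtopology X (Xs 0) closure_of (visiting Xs f V) = topspace (subtopology X (Xs 0))"
  unfolding dense_intersects_open
proof (intro allI impI)
  fix U assume U: "openin (subtopology X (Xs 0)) U \<and> U \<noteq> {}"
  have "openin (subtopology X (Xs 0)) (V \<inter> Xs 0)"
    using V by (auto simp: openin_subtopology)
  then obtain n where "traj f n ` U \<inter> (V \<inter> Xs 0) \<noteq> {}"
    using trans U V(2) unfolding top_transitive_def by blast
  then obtain y where y: "y \<in> U" "traj f n y \<in> V" by auto
  have "y \<in> Xs 0" using y(1) U openin_subset by force
  then show "visiting Xs f V \<inter> U \<noteq> {}" using y unfolding visiting_def by auto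
qed

lemma countable_test_family:
  assumes D: "countable D" "D \<subseteq> topspace X"
    and fc: "\<And>z. z \<in> D \<Longrightarrow> first_countable_at X z"
  obtains \<V> where "countable \<V>" "\<And>V. V \<in> \<V> \<Longrightarrow> openin X V \<and> V \<inter> D \<noteq> {}"
    "\<And>S. (\<And>V. V \<in> \<V> \<Longrightarrow> S \<inter> V \<noteq> {}) \<Longrightarrow> X closure_of D \<subseteq> X closure_of S"
proof -
  obtain NB where NB: "\<And>z. z \<in> D \<Longrightarrow> countable (NB z) \<and> (\<forall>V \<in> NB z. openin X V \<and> z \<in> V) \<and>
          (\<forall>U. openin X U \<and> z \<in> U \<longrightarrow> (\<exists>V \<in> NB z. V \<subseteq> U))"
    using fc unfolding first_countable_at_def by metis
  define \<V> where "\<V> = (\<Union>z\<in>D. NB z)"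
  have "countable \<V>" unfolding \<V>_def using D(1) NB by auto
  moreover have "openin X V \<and> V \<inter> D \<noteq> {}" if "V \<in> \<V>" for V
    using that NB unfolding \<V>_def by blast
  moreover have "X closure_of D \<subseteq> X closure_of S" if meets: "\<And>V. V \<in> \<V> \<Longrightarrow> S \<inter> V \<noteq> {}" for S
  proof (rule closure_of_minimal[OF _ closedin_closure_of])
    show "D \<subseteq> X closure_of S"
    proof
      fix z assume z: "z \<in> D"
      have "\<exists>y\<in>S. y \<in> U" if zU: "z \<in> U" "openin X U" for U
      proof -
        obtain V where "V \<in> NB z" "V \<subseteq> U" using NB[OF z] zU by auto
        then show ?thesis using meets[of V] z unfolding \<V>_def by auto
      qed
      then show "z \<in> X closure_of S" using z D(2) unfolding in_closure_of by auto
    qed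
  qed
  ultimately show thesis using that by blast
qed

text \<open>The Baire property for an arbitrary countable family of open dense sets
  (the definition uses sequences; an empty family is trivial).\<close>
lemma Baire_countable_family:
  assumes baire: "Baire_space T" and cU: "countable \<U>"
    and U: "\<And>U. U \<in> \<U> \<Longrightarrow> openin T U \<and> T closure_of U = topspace T"
  shows "T closure_of (topspace T \<inter> \<Inter>\<U>) = topspace T"
proof (cases "\<U> = {}")
  case True
  then show ?thesis by simp
next
  case False
  define U_seq where "U_seq k = from_nat_into \<U> k" for k
  have "\<Inter>\<U> = (\<Inter>k. U_seq k)"
    using range_from_nat_into[OF False cU] unfolding U_seq_def by simp
  moreover have "\<forall>k. openin T (U_seq k) \<and> T closure_of (U_seq k) = topspace T"
    unfolding U_seq_def using U from_nat_into[OF False] by blast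
  ultimately show ?thesis using baire unfolding Baire_space_def by simp
qed

theorem theorem1p1:
  fixes X :: "'a topology" and Xs :: "nat \<Rightarrow> 'a set" and f :: "nat \<Rightarrow> 'a \<Rightarrow> 'a"
  assumes subs: "\<And>n. Xs n \<subseteq> topspace X"
    and cont: "\<And>n. continuous_map (subtopology X (Xs n)) (subtopology X (Xs (Suc n))) (f n)"
    and sc: "second_countable (subtopology X (Xs 0))"
    and fc: "\<And>x. x \<in> Xs 0 \<Longrightarrow> first_countable_at X x"
    and trans: "top_transitive X Xs f"
    and notdense: "subtopology X (Xs 0) closure_of
                     {x \<in> Xs 0. (X closure_of orb f x) \<inter> Xs 0 = Xs 0} \<noteq> Xs 0"
  shows "\<not> Baire_space (subtopology X (Xs 0))"
proof
  assume baire: "Baire_space (subtopology X (Xs 0))"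
  let ?T = "subtopology X (Xs 0)" and ?O = "{x \<in> Xs 0. (X closure_of orb f x) \<inter> Xs 0 = Xs 0}"
  have topT: "topspace ?T = Xs 0" using subs[of 0] by auto
  obtain D where D: "countable D" "D \<subseteq> Xs 0" "?T closure_of D = Xs 0"
    using second_countable_imp_separable_space[OF sc] topT unfolding separable_space_def by auto
  have X0_in_closure: "Xs 0 \<subseteq> X closure_of D"
    using D(3) closure_of_subtopology_subset[of X "Xs 0" D] by auto
  have D_in_X: "D \<subseteq> topspace X" using D(2) subs[of 0] by blast
  have fc_D: "\<And>z. z \<in> D \<Longrightarrow> first_countable_at X z" using D(2) fc by blast
  obtain \<V> where \<V>: "countable \<V>" "\<And>V. V \<in> \<V> \<Longrightarrow> openin X V \<and> V \<inter> D \<noteq> {}"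
    and detects: "\<And>S. (\<And>V. V \<in> \<V> \<Longrightarrow> S \<inter> V \<noteq> {}) \<Longrightarrow> X closure_of D \<subseteq> X closure_of S"
    using countable_test_family[OF D(1) D_in_X fc_D] by metis
  have "openin ?T U \<and> ?T closure_of U = topspace ?T" if U: "U \<in> visiting Xs f ` \<V>" for U
  proof -
    obtain V where V: "V \<in> \<V>" "U = visiting Xs f V" using U by blast
    have "openin X V" "V \<inter> Xs 0 \<noteq> {}" using \<V>(2)[OF V(1)] D(2) by auto
    then show ?thesis
      using V(2) visiting_open[OF subs[of 0] cont] visiting_dense[OF trans] by simp
  qed
  then have "?T closure_of (topspace ?T \<inter> \<Inter>(visiting Xs f ` \<V>)) = topspace ?T"
    using Baire_countable_family[OF baire] \<V>(1) by simp
  moreover have "topspace ?T \<inter> \<Inter>(visiting Xs f ` \<V>) \<subseteq> ?O"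
  proof
    fix x assume x: "x \<in> topspace ?T \<inter> \<Inter>(visiting Xs f ` \<V>)"
    have "orb f x \<inter> V \<noteq> {}" if "V \<in> \<V>" for V
      using x that unfolding visiting_def orb_def by blast
    then show "x \<in> ?O" using detects[of "orb f x"] X0_in_closure x topT by auto
  qed
  ultimately have "Xs 0 \<subseteq> ?T closure_of ?O"
    using closure_of_mono topT by metis
  then have "?T closure_of ?O = Xs 0"
    using closure_of_subset_topspace[of ?T ?O] topT by blast
  with notdense show False by simp
qed

end
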